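(* For $n\in\mathbb{N}$, \[ B_{2n+1}^{*}=\frac{(-1)^n}{4}+\frac12U_{2n}\!\left(\tfrac12\right)=\frac{(-1)^n}{4}+\frac{1}{\sqrt3}\sin\!\left(\frac{(2n+1)\pi}{3}\right). \]
   Context: $B_r$ denotes the Bernoulli numbers and $B_n^{*}:=\sum_{r=0}^{n}\binom{n+r}{2r}\frac{B_r}{n+r}$ for $n\ge1$ (Zagier's modified Bernoulli numbers). $U_k$ is the Chebyshev polynomial of the second kind, $U_k(\cos\theta)=\frac{\sin((k+1)\theta)}{\sin\theta}$. *)

theory Defs
  imports Complex_Main
begin

text \<open>Bernoulli numbers with the convention B_1 = -1/2, defined by the standard
recurrence  sum_{k=0}^{n} (n+1 choose k) B_k = 0  for n >= 1, B_0 = 1.\<close>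
fun bernoulli :: "nat \<Rightarrow> real" where
  "bernoulli n = (if n = 0 then 1 else
     - (\<Sum>k<n. real ((n + 1) choose k) * bernoulli k) / real (n + 1))"

declare bernoulli.simps [simp del]

definition bernoulli_star :: "nat \<Rightarrow> real" where
  "bernoulli_star n = (\<Sum>r=0..n. real ((n + r) choose (2 * r)) * bernoulli r / real (n + r))"

text \<open>Chebyshev polynomials of the second kind, U_0 = 1, U_1 = 2x,
U_{k+2} = 2x U_{k+1} - U_k; equivalently U_k(cos t) = sin((k+1)t)/sin t.\<close>
fun chebyshevU :: "nat \<Rightarrow> real \<Rightarrow> real" where
  "chebyshevU 0 x = 1"
| "chebyshevU (Suc 0) x = 2 * x"
| "chebyshevU (Suc (Suc k)) x = 2 * x * chebyshevU (Suc k) x - chebyshevU k x"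

end

theory Submission
  imports
    Defs
    "HOL-Computational_Algebra.Polynomial"
    "HOL-Computational_Algebra.Formal_Power_Series"
begin

unbundle fps_syntax

text \<open>
Let L be the linear functional on real polynomials with L(x^i) = B_i. The Bernoulli recurrence
says L(p(x+1)) = L(p) + p'(0), and the evenness of x/(e^x-1) + x/2 says L(p(-1-x)) = L(p).
Now B*_m = L(b_m + b_(m-1)) / (2m) for the Morgan-Voyce polynomials b_m(x) = sum_r C(m+r,2r) x^r,
and b_m + b_(m-1) = 2 T_m(1 + x/2) for the Chebyshev polynomial T_m of the first kind. For odd m
the two symmetries of L then reduce B*_m to the values of T_m' = m U_(m-1) at 0 and at 1/2 and
-1/2, and U_k(1/2) = U_k(cos(pi/3)) is a sine value.
\<close>

lemma bernoulli_0 [simp]: "bernoulli 0 = 1"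
  by (simp add: bernoulli.simps)

lemma bernoulli_1 [simp]: "bernoulli 1 = -1/2"
  by (simp add: bernoulli.simps)

lemma bernoulli_recurrence:
  assumes "n \<ge> 1"
  shows "(\<Sum>k\<le>n. real (Suc n choose k) * bernoulli k) = 0"
proof -
  have "bernoulli n = - (\<Sum>k<n. real (Suc n choose k) * bernoulli k) / real (Suc n)"
    using assms by (subst bernoulli.simps) simp
  moreover have "(\<Sum>k\<le>n. real (Suc n choose k) * bernoulli k)
      = (\<Sum>k<n. real (Suc n choose k) * bernoulli k) + real (Suc n) * bernoulli n"
    by (simp add: lessThan_Suc_atMost[symmetric])
  ultimately show ?thesis
    by (simp add: field_simps)
qed

definition bernoulli_fps :: "real fps" where
  "bernoulli_fps = Abs_fps (\<lambda>n. bernoulli n / fact n)"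

lemma bernoulli_fps_mult_exp_minus_one: "bernoulli_fps * (fps_exp 1 - 1) = fps_X"
proof (rule fps_ext)
  fix n
  show "(bernoulli_fps * (fps_exp 1 - 1)) $ n = fps_X $ n"
  proof (cases n)
    case 0
    then show ?thesis by (simp add: fps_mult_nth)
  next
    case (Suc N)
    have "(bernoulli_fps * (fps_exp 1 - 1)) $ n
        = (\<Sum>i\<le>Suc N. bernoulli i / fact i * (if Suc N - i = 0 then 0 else 1 / fact (Suc N - i)))"
      using Suc by (simp add: fps_mult_nth bernoulli_fps_def atLeast0AtMost)
    also have "\<dots> = (\<Sum>i\<le>N. bernoulli i / fact i * (1 / fact (Suc N - i)))"
      by (simp add: sum.atMost_Suc mult.commute)
    also have "\<dots> = (\<Sum>i\<le>N. real (Suc N choose i) * bernoulli i) / fact (Suc N)"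
      unfolding sum_divide_distrib
    proof (rule sum.cong[OF refl])
      fix i
      assume "i \<in> {..N}"
      then have "real (Suc N choose i) = fact (Suc N) / (fact i * fact (Suc N - i))"
        by (simp add: binomial_fact)
      then show "bernoulli i / fact i * (1 / fact (Suc N - i))
          = real (Suc N choose i) * bernoulli i / fact (Suc N)"
        by (simp add: field_simps del: fact_Suc)
    qed
    also have "\<dots> = fps_X $ n"
      using Suc bernoulli_recurrence[of N] by (cases "N = 0") simp_all
    finally show ?thesis .
  qed
qed

text \<open>Substituting -x in the generating function gives x/(e^(-x) - 1) = x/(e^x - 1) + x.\<close>

lemma minus_one_power_mult_bernoulli:
  "(-1) ^ n * bernoulli n = bernoulli n + (if n = 1 then 1 else 0)"
proof -
  define E :: "real fps" where "E = fps_exp 1"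
  define g where "g = bernoulli_fps oo (- fps_X)"
  have g: "g * (fps_exp (-1) - 1) = - fps_X"
    using arg_cong[OF bernoulli_fps_mult_exp_minus_one, of "\<lambda>f. f oo (- fps_X)"]
    by (simp add: g_def fps_compose_mult_distrib fps_compose_sub_distrib)
  have "E * fps_exp (-1) = 1"
    by (simp add: E_def fps_exp_add_mult[symmetric])
  then have "g * (E - 1) = - (g * (fps_exp (-1) - 1)) * E"
    by (simp add: algebra_simps)
  then have "g * (E - 1) = fps_X * E"
    using g by simp
  then have "(g - fps_X) * (E - 1) = bernoulli_fps * (E - 1)"
    using bernoulli_fps_mult_exp_minus_one by (simp add: E_def algebra_simps)
  moreover have "E - 1 \<noteq> 0"
    using arg_cong[of "E - 1" 0 "\<lambda>f. f $ 1"] by (simp add: E_def)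
  ultimately have "(g - fps_X) $ n = bernoulli_fps $ n"
    by simp
  then have "(-1) ^ n * (bernoulli n / fact n) - (if n = 1 then 1 else 0) = bernoulli n / fact n"
    by (simp add: g_def fps_compose_uminus' bernoulli_fps_def)
  then show ?thesis
    by (cases "n = 1") (auto simp: field_simps)
qed

definition bernoulli_functional :: "real poly \<Rightarrow> real" where
  "bernoulli_functional p = (\<Sum>i\<le>degree p. coeff p i * bernoulli i)"

lemma bernoulli_functional_altdef:
  "degree p \<le> N \<Longrightarrow> bernoulli_functional p = (\<Sum>i\<le>N. coeff p i * bernoulli i)"
  unfolding bernoulli_functional_def
  by (rule sum.mono_neutral_left) (auto simp: coeff_eq_0)

lemma bernoulli_functional_add:
  "bernoulli_functional (p + q) = bernoulli_functional p + bernoulli_functional q"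
proof -
  let ?N = "max (degree p) (degree q)"
  have "degree (p + q) \<le> ?N"
    by (rule degree_add_le) auto
  then show ?thesis
    by (simp add: bernoulli_functional_altdef[of _ ?N] sum.distrib algebra_simps)
qed

lemma bernoulli_functional_smult:
  "bernoulli_functional (smult c p) = c * bernoulli_functional p"
  by (simp add: bernoulli_functional_altdef[of _ "degree p"] sum_distrib_left mult.assoc)

lemma bernoulli_functional_diff:
  "bernoulli_functional (p - q) = bernoulli_functional p - bernoulli_functional q"
  using bernoulli_functional_add[of p "-q"] bernoulli_functional_smult[of "-1" q] by simp

lemma bernoulli_functional_sum:
  "bernoulli_functional (\<Sum>i\<in>A. f i) = (\<Sum>i\<in>A. bernoulli_functional (f i))"
  by (induction A rule: infinite_finite_induct)
     (simp_all add: bernoulli_functional_def[of 0] bernoulli_functional_add)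

lemma bernoulli_functional_pcompose:
  "bernoulli_functional (pcompose p r)
     = (\<Sum>i\<le>degree p. coeff p i * bernoulli_functional (r ^ i))"
proof -
  have "pcompose p r = (\<Sum>i\<le>degree p. smult (coeff p i) (r ^ i))"
    by (simp add: pcompose_altdef poly_altdef degree_map_poly coeff_map_poly)
  then show ?thesis
    by (simp add: bernoulli_functional_sum bernoulli_functional_smult)
qed

lemma bernoulli_functional_linear_power:
  "bernoulli_functional ([:1, 1:] ^ n) = bernoulli n + (if n = 1 then 1 else 0)"
proof -
  have "bernoulli_functional ([:1, 1:] ^ n) = (\<Sum>k\<le>n. real (n choose k) * bernoulli k)"
    by (simp add: bernoulli_functional_def degree_linear_power coeff_linear_poly_power)
  also have "\<dots> = bernoulli n + (if n = 1 then 1 else 0)"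
  proof (cases "n \<ge> 2")
    case True
    then obtain j where "n = Suc j" "j \<ge> 1"
      by (cases n) auto
    then show ?thesis
      using bernoulli_recurrence[of j] by (simp add: sum.atMost_Suc)
  next
    case False
    then have "n = 0 \<or> n = 1"
      by auto
    then show ?thesis
      by auto
  qed
  finally show ?thesis .
qed

lemma bernoulli_functional_shift:
  "bernoulli_functional (pcompose p [:1, 1:]) = bernoulli_functional p + coeff p 1"
proof -
  have "bernoulli_functional (pcompose p [:1, 1:])
      = (\<Sum>i\<le>degree p. coeff p i * bernoulli i)
        + (\<Sum>i\<le>degree p. coeff p i * (if i = 1 then 1 else 0))"
    by (simp add: bernoulli_functional_pcompose bernoulli_functional_linear_power
        distrib_left sum.distrib)
  also have "(\<Sum>i\<le>degree p. coeff p i * (if i = 1 then 1 else 0)) = coeff p 1"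
    by (cases "degree p \<ge> 1") (auto simp: coeff_eq_0 if_distrib cong: if_cong)
  finally show ?thesis
    by (simp add: bernoulli_functional_def)
qed

lemma bernoulli_functional_reflect:
  "bernoulli_functional (pcompose p [:-1, -1:]) = bernoulli_functional p"
proof -
  have "bernoulli_functional ([:-1, -1:] ^ i) = bernoulli i" for i
    using minus_one_power_mult_bernoulli[of i]
      bernoulli_functional_smult[of "(-1) ^ i" "[:1, 1:] ^ i"]
    by (auto simp: smult_power[symmetric] bernoulli_functional_linear_power algebra_simps)
  then show ?thesis
    unfolding bernoulli_functional_pcompose by (simp add: bernoulli_functional_def[of p])
qed

text \<open>
For odd T put P(x) = 2 T(1 + x/2) and F(x) = T((x+1)/2) + T(x/2) + T((x-1)/2); then
P(x) + P(-1-x) = 2 (F(x+1) - F(x)), so the two symmetries of L give L(P) = F'(0).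
\<close>

lemma bernoulli_functional_odd_poly:
  fixes T :: "real poly"
  assumes odd: "\<And>x. poly T (- x) = - poly T x"
  shows "bernoulli_functional (smult 2 (pcompose T [:1, 1/2:]))
       = (poly (pderiv T) (1/2) + poly (pderiv T) 0 + poly (pderiv T) (-1/2)) / 2"
proof -
  define P where "P = smult 2 (pcompose T [:1, 1/2:])"
  define F where "F = pcompose T [:1/2, 1/2:] + pcompose T [:0, 1/2:] + pcompose T [:-1/2, 1/2:]"
  have "P + pcompose P [:-1, -1:] = smult 2 (pcompose F [:1, 1:] - F)"
  proof (rule poly_ext)
    fix y :: real
    have "poly T ((1 - y) / 2) = - poly T ((y - 1) / 2)"
      using odd[of "(y - 1) / 2"] by (simp add: minus_divide_left)
    then show "poly (P + pcompose P [:-1, -1:]) y = poly (smult 2 (pcompose F [:1, 1:] - F)) y"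
      by (simp add: P_def F_def poly_pcompose field_simps)
  qed
  then have "bernoulli_functional (P + pcompose P [:-1, -1:]) = 2 * coeff F 1"
    by (simp add: bernoulli_functional_smult bernoulli_functional_diff bernoulli_functional_shift)
  then have "bernoulli_functional P = coeff F 1"
    by (simp add: bernoulli_functional_add bernoulli_functional_reflect)
  also have "coeff F 1 = poly (pderiv F) 0"
    by (simp add: poly_0_coeff_0 coeff_pderiv)
  also have "\<dots> = (poly (pderiv T) (1/2) + poly (pderiv T) 0 + poly (pderiv T) (-1/2)) / 2"
    by (simp add: F_def pderiv_add pderiv_pcompose poly_pcompose pderiv_pCons)
  finally show ?thesis
    by (simp add: P_def)
qed

fun chebyshevT_poly :: "nat \<Rightarrow> real poly" where
  "chebyshevT_poly 0 = 1"
| "chebyshevT_poly (Suc 0) = [:0, 1:]"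
| "chebyshevT_poly (Suc (Suc k)) = [:0, 2:] * chebyshevT_poly (Suc k) - chebyshevT_poly k"

lemma poly_chebyshevT_poly_uminus:
  "poly (chebyshevT_poly k) (- x) = (-1) ^ k * poly (chebyshevT_poly k) x"
  by (induction k rule: chebyshevT_poly.induct) (simp_all add: algebra_simps)

lemma chebyshevU_uminus: "chebyshevU k (- x) = (-1) ^ k * chebyshevU k x"
  by (induction k x rule: chebyshevU.induct) (simp_all add: algebra_simps)

lemma chebyshevU_even_0: "chebyshevU (2 * n) 0 = (-1) ^ n"
  by (induction n) (simp_all add: numeral_2_eq_2)

lemma poly_chebyshevT_poly_Suc:
  "poly (chebyshevT_poly (Suc k)) x
     = x * chebyshevU k x - (if k = 0 then 0 else chebyshevU (k - 1) x)"
proof (induction k x rule: chebyshevU.induct)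
  case (3 k x)
  define U' where "U' = (if k = 0 then 0 else chebyshevU (k - 1) x)"
  have U: "chebyshevU (Suc k) x = 2 * x * chebyshevU k x - U'"
    by (cases k) (simp_all add: U'_def)
  have "poly (chebyshevT_poly (Suc (Suc (Suc k)))) x
      = 2 * x * poly (chebyshevT_poly (Suc (Suc k))) x - poly (chebyshevT_poly (Suc k)) x"
    by simp
  also have "\<dots> = 2 * x * (x * chebyshevU (Suc k) x - chebyshevU k x) - (x * chebyshevU k x - U')"
    using "3.IH" by (simp add: U'_def del: chebyshevU.simps chebyshevT_poly.simps)
  also have "\<dots>
      = x * (2 * x * chebyshevU (Suc k) x - chebyshevU k x) - (2 * x * chebyshevU k x - U')"
    by (simp add: algebra_simps)
  also have "\<dots> = x * chebyshevU (Suc (Suc k)) x - chebyshevU (Suc k) x"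
    by (simp only: U chebyshevU.simps(3))
  finally show ?case
    by simp
qed (simp_all add: algebra_simps)

lemma poly_pderiv_chebyshevT_poly:
  "poly (pderiv (chebyshevT_poly (Suc k))) x = real (Suc k) * chebyshevU k x"
proof (induction k x rule: chebyshevU.induct)
  case (1 x)
  then show ?case by (simp add: pderiv_pCons)
next
  case (2 x)
  then show ?case by (simp add: pderiv_pCons pderiv_mult pderiv_diff algebra_simps)
next
  case (3 k x)
  have "poly (pderiv (chebyshevT_poly (Suc (Suc (Suc k))))) x
      = 2 * poly (chebyshevT_poly (Suc (Suc k))) x
        + 2 * x * poly (pderiv (chebyshevT_poly (Suc (Suc k)))) x
        - poly (pderiv (chebyshevT_poly (Suc k))) x"
    by (simp only: chebyshevT_poly.simps(3) pderiv_diff pderiv_mult)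
       (simp add: pderiv_pCons algebra_simps)
  with 3 show ?case
    using poly_chebyshevT_poly_Suc[of "Suc k" x] by (simp add: algebra_simps)
qed

lemma chebyshevU_half: "chebyshevU k (1/2) = 2 * sin (real (Suc k) * pi / 3) / sqrt 3"
proof (induction k rule: induct_nat_012)
  case 0
  then show ?case by (simp add: sin_60)
next
  case 1
  then show ?case by (simp add: sin_60 sin_120)
next
  case (ge2 k)
  have "sin (t + 2 * pi / 3) = sin (t + pi / 3) - sin t" for t
    using sin_add[of "t + pi / 3" "pi / 3"] sin_add[of t "pi / 3"] cos_add[of t "pi / 3"]
    by (simp add: sin_60 cos_60 algebra_simps)
  from this[of "real (Suc k) * pi / 3"] ge2 show ?case
    by (simp add: algebra_simps add_divide_distrib diff_divide_distrib)
qed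

definition morgan_voyce_poly :: "nat \<Rightarrow> real poly" where
  "morgan_voyce_poly m = (\<Sum>r\<le>m. monom (real ((m + r) choose (2 * r))) r)"

lemma coeff_morgan_voyce_poly: "coeff (morgan_voyce_poly m) k = real ((m + k) choose (2 * k))"
proof (cases "k \<le> m")
  case True
  then show ?thesis by (simp add: morgan_voyce_poly_def coeff_sum)
next
  case False
  then show ?thesis by (simp add: morgan_voyce_poly_def coeff_sum binomial_eq_0)
qed

lemma degree_morgan_voyce_poly: "degree (morgan_voyce_poly m) \<le> m"
  unfolding morgan_voyce_poly_def
  by (rule degree_sum_le) (auto intro: order.trans[OF degree_monom_le])

lemma morgan_voyce_poly_Suc_Suc:
  "morgan_voyce_poly (Suc (Suc m)) = [:2, 1:] * morgan_voyce_poly (Suc m) - morgan_voyce_poly m"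
proof (rule poly_eqI)
  fix k
  show "coeff (morgan_voyce_poly (Suc (Suc m))) k
      = coeff ([:2, 1:] * morgan_voyce_poly (Suc m) - morgan_voyce_poly m) k"
  proof (cases k)
    case 0
    then show ?thesis by (simp add: coeff_morgan_voyce_poly)
  next
    case (Suc j)
    have "((m + j + 3) choose (2 * j + 2)) + ((m + j + 1) choose (2 * j + 2))
        = 2 * ((m + j + 2) choose (2 * j + 2)) + ((m + j + 1) choose (2 * j))"
      by (simp add: numeral_eq_Suc)
    then have "real ((m + j + 3) choose (2 * j + 2)) + real ((m + j + 1) choose (2 * j + 2))
        = 2 * real ((m + j + 2) choose (2 * j + 2)) + real ((m + j + 1) choose (2 * j))"
      by (metis of_nat_add of_nat_mult of_nat_numeral)
    with Suc show ?thesis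
      by (simp add: coeff_morgan_voyce_poly algebra_simps)
  qed
qed

lemma chebyshevT_poly_shift:
  "smult 2 (pcompose (chebyshevT_poly (Suc m)) [:1, 1/2:])
     = morgan_voyce_poly (Suc m) + morgan_voyce_poly m"
proof (induction m rule: induct_nat_012)
  case 0
  show ?case
    by (rule poly_ext) (simp add: morgan_voyce_poly_def poly_pcompose poly_monom numeral_2_eq_2)
next
  case 1
  show ?case
    by (rule poly_ext)
       (simp add: morgan_voyce_poly_def poly_pcompose poly_monom numeral_2_eq_2 algebra_simps
        power2_eq_square)
next
  case (ge2 m)
  have linear: "pcompose [:0, 2:] [:1, 1/2:] = ([:2, 1:] :: real poly)"
    by (simp add: pcompose_pCons)
  have "smult 2 (pcompose (chebyshevT_poly (Suc (Suc (Suc m)))) [:1, 1/2:])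
      = [:2, 1:] * smult 2 (pcompose (chebyshevT_poly (Suc (Suc m))) [:1, 1/2:])
        - smult 2 (pcompose (chebyshevT_poly (Suc m)) [:1, 1/2:])"
    by (simp only: chebyshevT_poly.simps(3)[of "Suc m"] pcompose_diff pcompose_mult linear
        smult_diff_right mult_smult_right)
  also have "\<dots> = [:2, 1:] * (morgan_voyce_poly (Suc (Suc m)) + morgan_voyce_poly (Suc m))
      - (morgan_voyce_poly (Suc m) + morgan_voyce_poly m)"
    by (simp only: ge2)
  also have "\<dots> = morgan_voyce_poly (Suc (Suc (Suc m))) + morgan_voyce_poly (Suc (Suc m))"
    by (simp only: morgan_voyce_poly_Suc_Suc[of "Suc m"] morgan_voyce_poly_Suc_Suc[of m])
       (simp add: algebra_simps)
  finally show ?case .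
qed

lemma binomial_diagonal_add_pred:
  assumes "r \<le> Suc m"
  shows "real ((Suc m + r) choose (2 * r)) + real ((m + r) choose (2 * r))
       = 2 * real (Suc m) * real ((Suc m + r) choose (2 * r)) / real (Suc m + r)"
proof -
  have "(Suc m - r) * ((Suc m + r) choose (2 * r)) = (Suc m + r) * ((m + r) choose (2 * r))"
    using binomial_absorb_comp[of "Suc m + r" "2 * r"] by (simp add: mult_2)
  then have "real (Suc m - r) * real ((Suc m + r) choose (2 * r))
      = real (Suc m + r) * real ((m + r) choose (2 * r))"
    by (metis of_nat_mult)
  then have "(real ((Suc m + r) choose (2 * r)) + real ((m + r) choose (2 * r))) * real (Suc m + r)
      = 2 * real (Suc m) * real ((Suc m + r) choose (2 * r))"
    using assms by (simp add: of_nat_diff algebra_simps)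
  then show ?thesis
    by (simp add: eq_divide_eq)
qed

lemma bernoulli_star_eq_functional:
  "bernoulli_star (Suc m)
     = bernoulli_functional (morgan_voyce_poly (Suc m) + morgan_voyce_poly m) / (2 * real (Suc m))"
proof -
  have "degree (morgan_voyce_poly (Suc m) + morgan_voyce_poly m) \<le> Suc m"
    using degree_morgan_voyce_poly[of "Suc m"] degree_morgan_voyce_poly[of m]
    by (intro degree_add_le) auto
  then have "bernoulli_functional (morgan_voyce_poly (Suc m) + morgan_voyce_poly m)
      = (\<Sum>r\<le>Suc m.
          (real ((Suc m + r) choose (2 * r)) + real ((m + r) choose (2 * r))) * bernoulli r)"
    by (simp add: bernoulli_functional_altdef coeff_morgan_voyce_poly)
  also have "\<dots> = 2 * real (Suc m)
      * (\<Sum>r\<le>Suc m. real ((Suc m + r) choose (2 * r)) * bernoulli r / real (Suc m + r))"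
    unfolding sum_distrib_left
  proof (rule sum.cong[OF refl])
    fix r
    assume "r \<in> {..Suc m}"
    then show "(real ((Suc m + r) choose (2 * r)) + real ((m + r) choose (2 * r))) * bernoulli r
        = 2 * real (Suc m) * (real ((Suc m + r) choose (2 * r)) * bernoulli r / real (Suc m + r))"
      by (simp only: atMost_iff binomial_diagonal_add_pred) simp
  qed
  also have "\<dots> = 2 * real (Suc m) * bernoulli_star (Suc m)"
    by (simp add: bernoulli_star_def atLeast0AtMost)
  finally show ?thesis
    by simp
qed

lemma bernoulli_star_odd:
  "bernoulli_star (2 * n + 1) = (-1) ^ n / 4 + chebyshevU (2 * n) (1 / 2) / 2"
proof -
  define m where "m = Suc (2 * n)"
  define T where "T = chebyshevT_poly m"
  have T': "poly (pderiv T) x = real m * chebyshevU (2 * n) x" for x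
    by (simp add: T_def m_def poly_pderiv_chebyshevT_poly)
  have "poly T (- x) = - poly T x" for x
    by (simp add: T_def m_def poly_chebyshevT_poly_uminus)
  moreover have "chebyshevU (2 * n) (-1/2) = chebyshevU (2 * n) (1/2)"
    using chebyshevU_uminus[of "2 * n" "1/2"] by simp
  moreover note chebyshevU_even_0[of n]
  ultimately have L: "bernoulli_functional (smult 2 (pcompose T [:1, 1/2:]))
      = real m * (2 * chebyshevU (2 * n) (1/2) + (-1) ^ n) / 2"
    by (simp add: bernoulli_functional_odd_poly T' field_simps)
  have "bernoulli_star m = bernoulli_functional (smult 2 (pcompose T [:1, 1/2:])) / (2 * real m)"
    by (simp add: bernoulli_star_eq_functional T_def m_def chebyshevT_poly_shift)
  also have "\<dots> = (2 * chebyshevU (2 * n) (1/2) + (-1) ^ n) / 4"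
    unfolding L by (simp add: m_def field_simps)
  finally show ?thesis
    by (simp add: m_def)
qed

theorem corollary5p1:
  fixes n :: nat
  shows "bernoulli_star (2 * n + 1) = (-1) ^ n / 4 + chebyshevU (2 * n) (1 / 2) / 2
       \<and> bernoulli_star (2 * n + 1) = (-1) ^ n / 4 + sin (real (2 * n + 1) * pi / 3) / sqrt 3"
  using bernoulli_star_odd[of n] chebyshevU_half[of "2 * n"] by simp

end
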